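(* Every finite-dimensional associative unital algebra over an algebraically closed field $\Bbbk$ admits a standardly based structure.
   Context: A standardly based structure on an algebra $A$ is a poset $(L,\le)$ together with two-sided ideals $A^{\ge p}$ ($p\in L$) such that $A^{\ge p}\supseteq A^{\ge q}$ whenever $p<q$; setting $A^{>p}$ to be the sum of the ideals $A^{\ge q}$ with $q>p$, one can choose complements $A^{(p)}$ of $A^{>p}$ in $A^{\ge p}$ with $\bigoplus_{p\in L}A^{(p)}=A$; and $A^{\ge p}/A^{>p}\cong W(p)\otimes_\Bbbk W'(p)$ as $A$-bimodules, for some left $A$-module $W(p)$ and right $A$-module $W'(p)$. *)

theory Defs
  imports "HOL-Computational_Algebra.Polynomial"
begin

definition fd_algebra :: "('k::field \<Rightarrow> 'a::ring_1 \<Rightarrow> 'a) \<Rightarrow> bool" where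
  "fd_algebra scale \<longleftrightarrow>
     vector_space scale \<and>
     (\<forall>c x y. scale c (x * y) = scale c x * y \<and> scale c (x * y) = x * scale c y) \<and>
     (\<exists>B. finite B \<and> module.span scale B = UNIV)"

definition poset_on :: "nat set \<Rightarrow> (nat \<Rightarrow> nat \<Rightarrow> bool) \<Rightarrow> bool" where
  "poset_on L le \<longleftrightarrow>
     (\<forall>p\<in>L. le p p) \<and>
     (\<forall>p\<in>L. \<forall>q\<in>L. le p q \<and> le q p \<longrightarrow> p = q) \<and>
     (\<forall>p\<in>L. \<forall>q\<in>L. \<forall>r\<in>L. le p q \<and> le q r \<longrightarrow> le p r)"

definition alg_ideal :: "('k::field \<Rightarrow> 'a::ring_1 \<Rightarrow> 'a) \<Rightarrow> 'a set \<Rightarrow> bool" where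
  "alg_ideal scale J \<longleftrightarrow> module.subspace scale J \<and> (\<forall>a x. x \<in> J \<longrightarrow> a * x \<in> J \<and> x * a \<in> J)"

definition ideal_gt :: "('k::field \<Rightarrow> 'a::ring_1 \<Rightarrow> 'a) \<Rightarrow> nat set \<Rightarrow> (nat \<Rightarrow> nat \<Rightarrow> bool)
    \<Rightarrow> (nat \<Rightarrow> 'a set) \<Rightarrow> nat \<Rightarrow> 'a set" where
  "ideal_gt scale L le I p = module.span scale (\<Union>{I q | q. q \<in> L \<and> le p q \<and> p \<noteq> q})"

definition left_module :: "('k::field \<Rightarrow> 'a::ring_1 \<Rightarrow> 'a) \<Rightarrow> 'a set \<Rightarrow> ('a \<Rightarrow> 'a \<Rightarrow> 'a) \<Rightarrow> bool" where
  "left_module scale W actL \<longleftrightarrow> module.subspace scale W \<and>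
     (\<forall>a w. w \<in> W \<longrightarrow> actL a w \<in> W) \<and>
     (\<forall>a w1 w2. w1 \<in> W \<longrightarrow> w2 \<in> W \<longrightarrow> actL a (w1 + w2) = actL a w1 + actL a w2) \<and>
     (\<forall>a b w. w \<in> W \<longrightarrow> actL (a + b) w = actL a w + actL b w) \<and>
     (\<forall>a b w. w \<in> W \<longrightarrow> actL (a * b) w = actL a (actL b w)) \<and>
     (\<forall>w. w \<in> W \<longrightarrow> actL 1 w = w) \<and>
     (\<forall>c a w. w \<in> W \<longrightarrow> actL (scale c a) w = scale c (actL a w) \<and> actL a (scale c w) = scale c (actL a w))"

definition right_module :: "('k::field \<Rightarrow> 'a::ring_1 \<Rightarrow> 'a) \<Rightarrow> 'a set \<Rightarrow> ('a \<Rightarrow> 'a \<Rightarrow> 'a) \<Rightarrow> bool" where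
  "right_module scale W actR \<longleftrightarrow> module.subspace scale W \<and>
     (\<forall>a w. w \<in> W \<longrightarrow> actR w a \<in> W) \<and>
     (\<forall>a w1 w2. w1 \<in> W \<longrightarrow> w2 \<in> W \<longrightarrow> actR (w1 + w2) a = actR w1 a + actR w2 a) \<and>
     (\<forall>a b w. w \<in> W \<longrightarrow> actR w (a + b) = actR w a + actR w b) \<and>
     (\<forall>a b w. w \<in> W \<longrightarrow> actR w (a * b) = actR (actR w a) b) \<and>
     (\<forall>w. w \<in> W \<longrightarrow> actR w 1 = w) \<and>
     (\<forall>c a w. w \<in> W \<longrightarrow> actR w (scale c a) = scale c (actR w a) \<and> actR (scale c w) a = scale c (actR w a))"

text \<open>The quotient bimodule J/U (U \<subseteq> J ideals) is isomorphic, as an A-bimodule, to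
  W \<otimes>_k W'. This is expressed via a k-bilinear map beta : W \<times> W' \<rightarrow> J (taken modulo U)
  inducing a bimodule isomorphism W \<otimes> W' \<rightarrow> J/U: it is balanced for the actions
  (modulo U), its image spans J modulo U (surjectivity), and it sends products
  B \<times> B' of finite independent sets to a family that is linearly independent modulo U
  (injectivity of the induced map on the tensor product).\<close>
definition quotient_iso_tensor ::
  "('k::field \<Rightarrow> 'a::ring_1 \<Rightarrow> 'a) \<Rightarrow> 'a set \<Rightarrow> 'a set \<Rightarrow> 'a set \<Rightarrow> ('a \<Rightarrow> 'a \<Rightarrow> 'a)
     \<Rightarrow> 'a set \<Rightarrow> ('a \<Rightarrow> 'a \<Rightarrow> 'a) \<Rightarrow> ('a \<Rightarrow> 'a \<Rightarrow> 'a) \<Rightarrow> bool" where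
  "quotient_iso_tensor scale J U W actL W' actR beta \<longleftrightarrow>
     (\<forall>w w'. w \<in> W \<longrightarrow> w' \<in> W' \<longrightarrow> beta w w' \<in> J) \<and>
     (\<forall>w1 w2 w'. w1 \<in> W \<longrightarrow> w2 \<in> W \<longrightarrow> w' \<in> W' \<longrightarrow> beta (w1 + w2) w' = beta w1 w' + beta w2 w') \<and>
     (\<forall>w w1' w2'. w \<in> W \<longrightarrow> w1' \<in> W' \<longrightarrow> w2' \<in> W' \<longrightarrow> beta w (w1' + w2') = beta w w1' + beta w w2') \<and>
     (\<forall>c w w'. w \<in> W \<longrightarrow> w' \<in> W' \<longrightarrow>
        beta (scale c w) w' = scale c (beta w w') \<and> beta w (scale c w') = scale c (beta w w')) \<and>
     (\<forall>a w w'. w \<in> W \<longrightarrow> w' \<in> W' \<longrightarrow>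
        a * beta w w' - beta (actL a w) w' \<in> U \<and> beta w w' * a - beta w (actR w' a) \<in> U) \<and>
     J \<subseteq> module.span scale ((\<lambda>(w, w'). beta w w') ` (W \<times> W') \<union> U) \<and>
     (\<forall>B B' (c :: 'a \<times> 'a \<Rightarrow> 'k). finite B \<longrightarrow> finite B' \<longrightarrow> B \<subseteq> W \<longrightarrow> B' \<subseteq> W' \<longrightarrow>
        \<not> module.dependent scale B \<longrightarrow> \<not> module.dependent scale B' \<longrightarrow>
        (\<Sum>(b, b') \<in> B \<times> B'. scale (c (b, b')) (beta b b')) \<in> U \<longrightarrow>
        (\<forall>x \<in> B \<times> B'. c x = 0))"

text \<open>Standardly based structure with poset (L, le), L a set of natural numbers, and
  ideals I p = A^{\<ge>p}.\<close>
definition standardly_based ::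
  "('k::field \<Rightarrow> 'a::ring_1 \<Rightarrow> 'a) \<Rightarrow> nat set \<Rightarrow> (nat \<Rightarrow> nat \<Rightarrow> bool) \<Rightarrow> (nat \<Rightarrow> 'a set) \<Rightarrow> bool" where
  "standardly_based scale L le I \<longleftrightarrow>
     poset_on L le \<and>
     (\<forall>p\<in>L. alg_ideal scale (I p)) \<and>
     (\<forall>p\<in>L. \<forall>q\<in>L. le p q \<and> p \<noteq> q \<longrightarrow> I q \<subseteq> I p) \<and>
     (\<exists>C :: nat \<Rightarrow> 'a set.
        (\<forall>p\<in>L. module.subspace scale (C p) \<and>
                I p = {u + v | u v. u \<in> C p \<and> v \<in> ideal_gt scale L le I p} \<and>
                C p \<inter> ideal_gt scale L le I p = {0}) \<and>
        module.span scale (\<Union>p\<in>L. C p) = UNIV \<and>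
        (\<forall>F x. finite F \<longrightarrow> F \<subseteq> L \<longrightarrow> (\<forall>p\<in>F. x p \<in> C p) \<longrightarrow> sum x F = 0 \<longrightarrow> (\<forall>p\<in>F. x p = 0))) \<and>
     (\<forall>p\<in>L. \<exists>W actL W' actR beta.
        left_module scale W actL \<and> right_module scale W' actR \<and>
        quotient_iso_tensor scale (I p) (ideal_gt scale L le I p) W actL W' actR beta)"

end

theory Submission
  imports Defs
begin

text \<open>Take a chief series \<open>A = I 0 \<supset> I 1 \<supset> \<dots> \<supset> I n = 0\<close> of two-sided ideals and index the
  structure by the positions, so that \<open>A^{>k} = I (k + 1)\<close>; linear complements of each
  \<open>I (k + 1)\<close> in \<open>I k\<close> give the direct sum decomposition. It remains to write every chief factor
  \<open>J/U\<close> as a tensor product \<open>W \<otimes> W'\<close>. Pick \<open>w0\<close> in a minimal left ideal strictly between \<open>U\<close>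
  and \<open>J\<close>, so that \<open>W = (A w0 + U)/U\<close> is simple; let \<open>W'\<close> consist of the classes of those
  \<open>m \<in> J\<close> with \<open>a m \<in> U\<close> whenever \<open>a w0 \<in> U\<close>, and set \<open>\<beta>(a w0, m) = a m\<close>. This pairing is
  well defined and balanced. Its image spans \<open>J\<close> modulo \<open>U\<close>, since it spans a two-sided ideal
  containing \<open>U\<close> and \<open>\<beta>(w0, w0) \<notin> U\<close>. The induced map \<open>W \<otimes> W' \<rightarrow> J/U\<close> is injective by a
  density argument, which rests on Schur's lemma: over an algebraically closed field every
  endomorphism of the simple module \<open>W\<close> is a scalar.\<close>

section \<open>Complements along a chain of subspaces\<close>

lemma chain_antimono:
  assumes "\<And>k. k < n \<Longrightarrow> I (Suc k) \<subseteq> I k" and "k \<le> j" and "j \<le> n"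
  shows "I j \<subseteq> I k"
  using assms(2,3)
proof (induction j rule: dec_induct)
  case (step j)
  then show ?case using assms(1)[of j] by simp
qed simp

context vector_space
begin

lemma linear_projection_modulo_exists:
  assumes "subspace U"
  obtains P where "Vector_Spaces.linear scale scale P" "\<And>x. x - P x \<in> U" "\<And>u. u \<in> U \<Longrightarrow> P u = 0"
proof -
  interpret pair: vector_space_pair scale scale by unfold_locales
  obtain B where B: "B \<subseteq> U" "independent B" "U \<subseteq> span B"
    by (rule basis_exists)
  define R where "R = pair.construct B id"
  have R_linear: "Vector_Spaces.linear scale scale R"
    unfolding R_def by (rule pair.linear_construct[OF B(2)])
  have R_in_U: "R x \<in> U" for x
    using pair.construct_in_span[OF B(2), of id x] span_minimal[OF B(1) assms]
    by (auto simp: R_def)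
  have R_id: "R u = u" if "u \<in> U" for u
    using pair.linear_eq_on[OF R_linear linear_id, of u B] that B(3)
    by (auto simp: R_def pair.construct_basis[OF B(2)])
  show ?thesis
  proof
    show "Vector_Spaces.linear scale scale (\<lambda>x. x - R x)"
      by (rule pair.linear_compose_sub[OF linear_ident R_linear])
    show "x - (x - R x) \<in> U" for x
      using R_in_U[of x] by simp
    show "u - R u = 0" if "u \<in> U" for u
      using R_id[OF that] by simp
  qed
qed

lemma subspace_complement_exists:
  assumes U: "subspace U" and J: "subspace J" and "U \<subseteq> J"
  shows "\<exists>C. subspace C \<and> C \<subseteq> J \<and> J = {u + v | u v. u \<in> C \<and> v \<in> U} \<and> C \<inter> U = {0}"
proof -
  obtain P where P: "Vector_Spaces.linear scale scale P" "\<And>x. x - P x \<in> U" "\<And>u. u \<in> U \<Longrightarrow> P u = 0"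
    using linear_projection_modulo_exists[OF U] by blast
  interpret P: Vector_Spaces.linear scale scale P by (rule P(1))
  have P_idem: "P (P x) = P x" for x
    using P(3)[OF P(2)[of x]] by (simp add: P.diff)
  have P_in_J: "P x \<in> J" if "x \<in> J" for x
    using subspace_diff[OF J that, of "x - P x"] P(2)[of x] \<open>U \<subseteq> J\<close> by auto
  show ?thesis
  proof (intro exI[of _ "P ` J"] conjI)
    show "subspace (P ` J)"
      using J by (rule P.subspace_image)
    show "P ` J \<subseteq> J"
      using P_in_J by blast
    show "J = {u + v | u v. u \<in> P ` J \<and> v \<in> U}"
    proof
      show "J \<subseteq> {u + v | u v. u \<in> P ` J \<and> v \<in> U}"
      proof
        fix x assume "x \<in> J"
        then have "x = P x + (x - P x)" "P x \<in> P ` J" "x - P x \<in> U"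
          using P(2) by auto
        then show "x \<in> {u + v | u v. u \<in> P ` J \<and> v \<in> U}" by blast
      qed
      show "{u + v | u v. u \<in> P ` J \<and> v \<in> U} \<subseteq> J"
        using P_in_J \<open>U \<subseteq> J\<close> subspace_add[OF J] by auto
    qed
    have "P x = 0" if "P x \<in> U" for x
      using P(3)[OF that] P_idem by simp
    then show "P ` J \<inter> U = {0}"
      using subspace_0[OF U] subspace_0[OF J] P.zero by force
  qed
qed

lemma chain_subset_span_complements:
  assumes "I n = {0}" and "k \<le> n"
    and I_sum: "\<And>p. p < n \<Longrightarrow> I p = {u + v | u v. u \<in> C p \<and> v \<in> I (Suc p)}"
  shows "I k \<subseteq> span (\<Union>p\<in>{k..<n}. C p)"
  using \<open>k \<le> n\<close>
proof (induction k rule: inc_induct)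
  case base
  then show ?case using \<open>I n = {0}\<close> span_zero by auto
next
  case (step k)
  have "span (\<Union>p\<in>{Suc k..<n}. C p) \<subseteq> span (\<Union>p\<in>{k..<n}. C p)"
    by (intro span_mono UN_mono) auto
  moreover have "C k \<subseteq> span (\<Union>p\<in>{k..<n}. C p)"
    using step(2) span_superset[of "\<Union>p\<in>{k..<n}. C p"] atLeastLessThan_iff by blast
  ultimately have "u + v \<in> span (\<Union>p\<in>{k..<n}. C p)" if "u \<in> C k" "v \<in> I (Suc k)" for u v
    using that step.IH span_add by blast
  then show ?case
    by (subst I_sum[OF step(2)]) blast
qed

lemma chain_complements_independent:
  assumes I_subspace: "\<And>k. k \<le> n \<Longrightarrow> subspace (I k)"
    and I_dec: "\<And>k. k < n \<Longrightarrow> I (Suc k) \<subseteq> I k"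
    and C_sub: "\<And>p. p < n \<Longrightarrow> C p \<subseteq> I p"
    and C_disjoint: "\<And>p. p < n \<Longrightarrow> C p \<inter> I (Suc p) = {0}"
    and F: "finite F" "F \<subseteq> {..<n}" and x: "\<forall>p\<in>F. x p \<in> C p" and "sum x F = 0"
  shows "\<forall>p\<in>F. x p = 0"
proof (rule ccontr)
  assume "\<not> (\<forall>p\<in>F. x p = 0)"
  then have support_ne: "{p \<in> F. x p \<noteq> 0} \<noteq> {}" by blast
  define p0 where "p0 = Min {p \<in> F. x p \<noteq> 0}"
  have p0: "p0 \<in> F" "x p0 \<noteq> 0" "p0 < n"
    using Min_in[OF _ support_ne] F unfolding p0_def by auto
  have "x q \<in> I (Suc p0)" if "q \<in> F - {p0}" for q
  proof (cases "x q = 0")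
    case True
    then show ?thesis using subspace_0[OF I_subspace[of "Suc p0"]] p0(3) by simp
  next
    case False
    then have "p0 \<le> q"
      using that F(1) unfolding p0_def by (intro Min_le) auto
    then have "Suc p0 \<le> q" "q < n"
      using that F(2) by (auto simp: Suc_le_eq)
    then have "I q \<subseteq> I (Suc p0)"
      using chain_antimono[where I = I and n = n, OF I_dec] by simp
    then show ?thesis
      using C_sub \<open>q < n\<close> x that by blast
  qed
  then have "sum x (F - {p0}) \<in> I (Suc p0)"
    using p0(3) by (intro subspace_sum[OF I_subspace]) auto
  moreover have "x p0 = - sum x (F - {p0})"
    using \<open>sum x F = 0\<close> sum.remove[OF F(1) p0(1), of x] by (simp add: eq_neg_iff_add_eq_0)
  ultimately have "x p0 \<in> I (Suc p0)"
    using subspace_neg[OF I_subspace] p0(3) by fastforce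
  then show False
    using C_disjoint[OF p0(3)] x p0 by blast
qed

lemma chain_direct_sum_decomposition:
  assumes I_subspace: "\<And>k. k \<le> n \<Longrightarrow> subspace (I k)"
    and I_dec: "\<And>k. k < n \<Longrightarrow> I (Suc k) \<subseteq> I k" and "I n = {0}"
  obtains C where "\<And>p. p < n \<Longrightarrow> subspace (C p)"
    "\<And>p. p < n \<Longrightarrow> I p = {u + v | u v. u \<in> C p \<and> v \<in> I (Suc p)}"
    "\<And>p. p < n \<Longrightarrow> C p \<inter> I (Suc p) = {0}"
    "I 0 \<subseteq> span (\<Union>p\<in>{..<n}. C p)"
    "\<And>F x. finite F \<Longrightarrow> F \<subseteq> {..<n} \<Longrightarrow> \<forall>p\<in>F. x p \<in> C p \<Longrightarrow> sum x F = 0 \<Longrightarrow> \<forall>p\<in>F. x p = 0"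
proof -
  let ?complement = "\<lambda>p C. subspace C \<and> C \<subseteq> I p \<and>
    I p = {u + v | u v. u \<in> C \<and> v \<in> I (Suc p)} \<and> C \<inter> I (Suc p) = {0}"
  define C where "C p = (SOME C. ?complement p C)" for p
  have "?complement p (C p)" if p_less: "p < n" for p
  proof -
    have "subspace (I (Suc p))" "subspace (I p)"
      using p_less I_subspace by simp_all
    then have "\<exists>C. ?complement p C"
      using I_dec[OF p_less] by (rule subspace_complement_exists)
    then show ?thesis
      unfolding C_def by (rule someI_ex)
  qed
  then have C: "\<And>p. p < n \<Longrightarrow> subspace (C p)" "\<And>p. p < n \<Longrightarrow> C p \<subseteq> I p"
    "\<And>p. p < n \<Longrightarrow> I p = {u + v | u v. u \<in> C p \<and> v \<in> I (Suc p)}"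
    "\<And>p. p < n \<Longrightarrow> C p \<inter> I (Suc p) = {0}"
    by blast+
  show ?thesis
  proof (rule that)
    show "I 0 \<subseteq> span (\<Union>p\<in>{..<n}. C p)"
      using chain_subset_span_complements[of I n 0 C] C(3) \<open>I n = {0}\<close> by (simp add: atLeast0LessThan)
    show "\<forall>p\<in>F. x p = 0" if "finite F" "F \<subseteq> {..<n}" "\<forall>p\<in>F. x p \<in> C p" "sum x F = 0" for F x
      using chain_complements_independent[where I = I and n = n and C = C, OF I_subspace I_dec C(2,4) that] .
  qed (use C in blast)+
qed

end

section \<open>Chains of ideals in a finite-dimensional algebra\<close>

locale finite_dimensional_algebra = finite_dimensional_vector_space scale Basis
  for scale :: "'k::field \<Rightarrow> 'a::ring_1 \<Rightarrow> 'a" and Basis +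
  assumes scale_mult_left: "scale c (x * y) = scale c x * y"
    and scale_mult_right: "scale c (x * y) = x * scale c y"
begin

lemma scale_one_mult: "scale c 1 * x = scale c x"
  by (metis scale_mult_left mult_1_left)

lemma mult_scale_one: "x * scale c 1 = scale c x"
  by (metis scale_mult_right mult_1_right)

lemma subspace_mult_left: "subspace X \<Longrightarrow> subspace ((\<lambda>x. a * x) -` X)"
  by (auto simp: subspace_def distrib_left scale_mult_right[symmetric])

lemma subspace_mult_right: "subspace X \<Longrightarrow> subspace ((\<lambda>x. x * a) -` X)"
  by (auto simp: subspace_def distrib_right scale_mult_left[symmetric])

lemma span_mult_left_closed:
  assumes "\<And>g. g \<in> G \<Longrightarrow> a * g \<in> span G" and "x \<in> span G"
  shows "a * x \<in> span G"
proof -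
  have "x \<in> (\<lambda>x. a * x) -` span G"
    using assms(2)
  proof (induction rule: span_induct)
    case base
    then show ?case using subspace_mult_left[OF subspace_span] by (simp add: vimage_def)
  next
    case (step x)
    then show ?case using assms(1) by simp
  qed
  then show ?thesis by simp
qed

lemma span_mult_right_closed:
  assumes "\<And>g. g \<in> G \<Longrightarrow> g * a \<in> span G" and "x \<in> span G"
  shows "x * a \<in> span G"
proof -
  have "x \<in> (\<lambda>x. x * a) -` span G"
    using assms(2)
  proof (induction rule: span_induct)
    case base
    then show ?case using subspace_mult_right[OF subspace_span] by (simp add: vimage_def)
  next
    case (step x)
    then show ?case using assms(1) by simp
  qed
  then show ?thesis by simp
qed

definition left_ideal :: "'a set \<Rightarrow> bool" where
  "left_ideal X \<longleftrightarrow> subspace X \<and> (\<forall>a x. x \<in> X \<longrightarrow> a * x \<in> X)"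

lemma alg_ideal_imp_left_ideal: "alg_ideal scale X \<Longrightarrow> left_ideal X"
  by (simp add: alg_ideal_def left_ideal_def)

lemma ideal_gt_chain:
  assumes I_subspace: "\<And>k. k \<le> n \<Longrightarrow> subspace (I k)"
    and I_dec: "\<And>k. k < n \<Longrightarrow> I (Suc k) \<subseteq> I k" and "I n = {0}" and "p < n"
  shows "ideal_gt scale {..<n} (\<le>) I p = I (Suc p)"
proof -
  let ?G = "\<Union>{I q | q. q \<in> {..<n} \<and> p \<le> q \<and> p \<noteq> q}"
  have "?G \<subseteq> I (Suc p)"
  proof
    fix x assume "x \<in> ?G"
    then obtain q where "x \<in> I q" "q < n" "p \<le> q" "p \<noteq> q" by blast
    then show "x \<in> I (Suc p)"
      using chain_antimono[where I = I and n = n, OF I_dec, of "Suc p" q] by auto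
  qed
  then have "span ?G \<subseteq> I (Suc p)"
    using span_minimal I_subspace[of "Suc p"] \<open>p < n\<close> by simp
  moreover have "I (Suc p) \<subseteq> span ?G"
  proof (cases "Suc p < n")
    case True
    then have "I (Suc p) \<in> {I q | q. q \<in> {..<n} \<and> p \<le> q \<and> p \<noteq> q}" by auto
    then show ?thesis
      using span_superset[of ?G] by (meson Union_upper order_trans)
  next
    case False
    then have "Suc p = n" using \<open>p < n\<close> by simp
    then show ?thesis using \<open>I n = {0}\<close> span_zero by simp
  qed
  ultimately show ?thesis
    unfolding ideal_gt_def by (rule subset_antisym)
qed

lemma standard_complements_of_chain:
  assumes "I 0 = UNIV" and "I n = {0}"
    and I_subspace: "\<And>k. k \<le> n \<Longrightarrow> subspace (I k)"
    and I_dec: "\<And>k. k < n \<Longrightarrow> I (Suc k) \<subseteq> I k"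
  shows "\<exists>C. (\<forall>p\<in>{..<n}. subspace (C p) \<and>
        I p = {u + v | u v. u \<in> C p \<and> v \<in> ideal_gt scale {..<n} (\<le>) I p} \<and>
        C p \<inter> ideal_gt scale {..<n} (\<le>) I p = {0}) \<and>
      span (\<Union>p\<in>{..<n}. C p) = UNIV \<and>
      (\<forall>F x. finite F \<longrightarrow> F \<subseteq> {..<n} \<longrightarrow> (\<forall>p\<in>F. x p \<in> C p) \<longrightarrow> sum x F = 0 \<longrightarrow>
        (\<forall>p\<in>F. x p = 0))"
proof -
  have gt: "\<And>p. p < n \<Longrightarrow> ideal_gt scale {..<n} (\<le>) I p = I (Suc p)"
    using ideal_gt_chain[OF I_subspace I_dec \<open>I n = {0}\<close>] .
  obtain C where C: "\<And>p. p < n \<Longrightarrow> subspace (C p)"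
    "\<And>p. p < n \<Longrightarrow> I p = {u + v | u v. u \<in> C p \<and> v \<in> I (Suc p)}"
    "\<And>p. p < n \<Longrightarrow> C p \<inter> I (Suc p) = {0}"
    "I 0 \<subseteq> span (\<Union>p\<in>{..<n}. C p)"
    "\<And>F x. finite F \<Longrightarrow> F \<subseteq> {..<n} \<Longrightarrow> \<forall>p\<in>F. x p \<in> C p \<Longrightarrow> sum x F = 0 \<Longrightarrow> \<forall>p\<in>F. x p = 0"
    using chain_direct_sum_decomposition[OF I_subspace I_dec \<open>I n = {0}\<close>] by blast
  show ?thesis
  proof (intro exI[of _ C] conjI allI impI ballI)
    fix p assume "p \<in> {..<n}"
    then show "subspace (C p)"
      and "I p = {u + v | u v. u \<in> C p \<and> v \<in> ideal_gt scale {..<n} (\<le>) I p}"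
      and "C p \<inter> ideal_gt scale {..<n} (\<le>) I p = {0}"
      using C(1-3) gt by simp_all
  next
    show "span (\<Union>p\<in>{..<n}. C p) = UNIV"
      using C(4) \<open>I 0 = UNIV\<close> by (simp add: top_unique)
  next
    fix F x p assume "finite F" "F \<subseteq> {..<n}" "\<forall>p\<in>F. x p \<in> C p" "sum x F = 0" "p \<in> F"
    then show "x p = 0"
      using C(5) by blast
  qed
qed

lemma standardly_based_of_chain:
  assumes "I 0 = UNIV" and "I n = {0}"
    and I_ideal: "\<And>k. k \<le> n \<Longrightarrow> alg_ideal scale (I k)"
    and I_dec: "\<And>k. k < n \<Longrightarrow> I (Suc k) \<subseteq> I k"
    and I_tensor: "\<And>k. k < n \<Longrightarrow> \<exists>W actL W' actR beta.
      left_module scale W actL \<and> right_module scale W' actR \<and>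
      quotient_iso_tensor scale (I k) (I (Suc k)) W actL W' actR beta"
  shows "standardly_based scale {..<n} (\<le>) I"
proof -
  have I_subspace: "\<And>k. k \<le> n \<Longrightarrow> subspace (I k)"
    using I_ideal by (simp add: alg_ideal_def)
  have "poset_on {..<n} (\<le>)"
    by (auto simp: poset_on_def)
  moreover have "\<forall>p\<in>{..<n}. alg_ideal scale (I p)"
    using I_ideal by simp
  moreover have "\<forall>p\<in>{..<n}. \<forall>q\<in>{..<n}. p \<le> q \<and> p \<noteq> q \<longrightarrow> I q \<subseteq> I p"
  proof (intro ballI impI)
    fix p q assume "q \<in> {..<n}" "p \<le> q \<and> p \<noteq> q"
    then show "I q \<subseteq> I p"
      using chain_antimono[where I = I and n = n, OF I_dec, of p q] by simp
  qed
  moreover have "\<forall>p\<in>{..<n}. \<exists>W actL W' actR beta.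
      left_module scale W actL \<and> right_module scale W' actR \<and>
      quotient_iso_tensor scale (I p) (ideal_gt scale {..<n} (\<le>) I p) W actL W' actR beta"
    using I_tensor ideal_gt_chain[OF I_subspace I_dec \<open>I n = {0}\<close>] by simp
  ultimately show ?thesis
    unfolding standardly_based_def
    using standard_complements_of_chain[OF \<open>I 0 = UNIV\<close> \<open>I n = {0}\<close> I_subspace I_dec] by blast
qed

definition ideal_cover :: "'a set \<Rightarrow> 'a set \<Rightarrow> bool" where
  "ideal_cover U J \<longleftrightarrow> U \<subset> J \<and> (\<forall>X. alg_ideal scale X \<longrightarrow> U \<subseteq> X \<longrightarrow> X \<subseteq> J \<longrightarrow> X = U \<or> X = J)"

lemma maximal_subideal_exists:
  assumes J: "alg_ideal scale J" and "J \<noteq> {0}"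
  obtains J' where "alg_ideal scale J'" "ideal_cover J' J"
proof -
  let ?proper = "\<lambda>X. alg_ideal scale X \<and> X \<subset> J"
  have "?proper {0}"
    using assms subspace_0[of J] by (auto simp: alg_ideal_def)
  moreover have "\<forall>X. ?proper X \<longrightarrow> dim X < Suc dimension"
    using dim_subset_UNIV le_imp_less_Suc by blast
  ultimately obtain J' where J': "?proper J'" and J'_max: "\<And>X. ?proper X \<Longrightarrow> dim X \<le> dim J'"
    using ex_has_greatest_nat[of ?proper "{0}" dim "Suc dimension"] by blast
  have "X = J' \<or> X = J" if "alg_ideal scale X" "J' \<subseteq> X" "X \<subseteq> J" for X
  proof (cases "X = J")
    case False
    then have "dim X \<le> dim J'"
      using that by (intro J'_max) blast
    then show ?thesis
      using that J' by (intro disjI1 subspace_dim_equal[symmetric]) (auto simp: alg_ideal_def)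
  qed blast
  then show ?thesis
    using J' that unfolding ideal_cover_def by blast
qed

lemma chief_series_exists:
  assumes "alg_ideal scale J"
  shows "\<exists>n I. I 0 = J \<and> I n = {0} \<and> (\<forall>k\<le>n. alg_ideal scale (I k)) \<and>
    (\<forall>k<n. ideal_cover (I (Suc k)) (I k))"
  using assms
proof (induction "dim J" arbitrary: J rule: less_induct)
  case less
  show ?case
  proof (cases "J = {0}")
    case True
    then show ?thesis
      using less.prems by (intro exI[of _ 0] exI[of _ "\<lambda>_. J"]) simp
  next
    case False
    obtain J' where J': "alg_ideal scale J'" "ideal_cover J' J"
      using maximal_subideal_exists[OF less.prems False] .
    have span_J': "span J' = J'" and span_J: "span J = J"
      using J'(1) less.prems by (simp_all add: alg_ideal_def span_eq_iff)
    have "span J' \<subset> span J"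
      unfolding span_J' span_J using J'(2) by (simp add: ideal_cover_def)
    then have "dim J' < dim J"
      by (rule dim_psubset)
    then obtain n I where I: "I 0 = J'" "I n = {0}" "\<forall>k\<le>n. alg_ideal scale (I k)"
      "\<forall>k<n. ideal_cover (I (Suc k)) (I k)"
      using less.hyps[OF _ J'(1)] by blast
    define I' where "I' k = (if k = 0 then J else I (k - 1))" for k
    have "\<forall>k\<le>Suc n. alg_ideal scale (I' k)"
      using I(3) less.prems by (simp add: I'_def)
    moreover have "\<forall>k<Suc n. ideal_cover (I' (Suc k)) (I' k)"
      using I(1,4) J'(2) by (auto simp: I'_def less_Suc_eq_0_disj)
    ultimately show ?thesis
      using I(2) by (intro exI[of _ "Suc n"] exI[of _ I']) (simp add: I'_def)
  qed
qed

end

section \<open>Simple left modules and Schur's lemma\<close>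

context finite_dimensional_algebra
begin

text \<open>\<open>simple_generator U w\<close> encodes that \<open>(A w + U)/U\<close> is a nonzero simple left module.\<close>

definition simple_generator :: "'a set \<Rightarrow> 'a \<Rightarrow> bool" where
  "simple_generator U w \<longleftrightarrow> w \<notin> U \<and> (\<forall>y. y * w \<notin> U \<longrightarrow> (\<exists>b. b * (y * w) - w \<in> U))"

lemma left_ideal_generated_modulo:
  assumes U: "left_ideal U"
  shows "left_ideal {a * y + u | a u. u \<in> U}"
  unfolding left_ideal_def subspace_def
proof (intro conjI allI ballI impI)
  have U_subspace: "subspace U" and U_left: "\<And>a x. x \<in> U \<Longrightarrow> a * x \<in> U"
    using U by (auto simp: left_ideal_def)
  have "0 = 0 * y + 0" by simp
  then show "0 \<in> {a * y + u | a u. u \<in> U}"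
    using subspace_0[OF U_subspace] by blast
  show "p + q \<in> {a * y + u | a u. u \<in> U}"
    if p: "p \<in> {a * y + u | a u. u \<in> U}" and q: "q \<in> {a * y + u | a u. u \<in> U}" for p q
  proof -
    obtain a u b v where "p = a * y + u" "q = b * y + v" "u \<in> U" "v \<in> U"
      using p q by blast
    then have "p + q = (a + b) * y + (u + v)" "u + v \<in> U"
      using subspace_add[OF U_subspace] by (auto simp: algebra_simps)
    then show ?thesis by blast
  qed
  show "scale c p \<in> {a * y + u | a u. u \<in> U}" if p: "p \<in> {a * y + u | a u. u \<in> U}" for c p
  proof -
    obtain a u where "p = a * y + u" "u \<in> U"
      using p by blast
    then have "scale c p = scale c a * y + scale c u" "scale c u \<in> U"
      using subspace_scale[OF U_subspace] by (auto simp: scale_right_distrib scale_mult_left)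
    then show ?thesis by blast
  qed
  show "c * p \<in> {a * y + u | a u. u \<in> U}" if p: "p \<in> {a * y + u | a u. u \<in> U}" for c p
  proof -
    obtain a u where "p = a * y + u" "u \<in> U"
      using p by blast
    then have "c * p = (c * a) * y + c * u" "c * u \<in> U"
      using U_left by (auto simp: distrib_left mult.assoc)
    then show ?thesis by blast
  qed
qed

lemma minimal_left_ideal_exists:
  assumes "left_ideal J" and "U \<subset> J"
  obtains S where "left_ideal S" "U \<subset> S" "S \<subseteq> J"
    "\<And>X. left_ideal X \<Longrightarrow> U \<subseteq> X \<Longrightarrow> X \<subseteq> S \<Longrightarrow> X = U \<or> X = S"
proof -
  let ?between = "\<lambda>X. left_ideal X \<and> U \<subset> X \<and> X \<subseteq> J"
  obtain S where S: "?between S" and S_min: "\<And>X. ?between X \<Longrightarrow> dim S \<le> dim X"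
    using ex_has_least_nat[of ?between J dim] assms by blast
  have "X = U \<or> X = S" if "left_ideal X" "U \<subseteq> X" "X \<subseteq> S" for X
  proof (cases "X = U")
    case False
    then have "dim S \<le> dim X"
      using that S by (intro S_min) auto
    then show ?thesis
      using that S by (intro disjI2 subspace_dim_equal) (auto simp: left_ideal_def)
  qed blast
  then show ?thesis
    using S that by blast
qed

lemma minimal_left_ideal_generated:
  assumes U: "left_ideal U" and S: "left_ideal S" "U \<subseteq> S"
    and S_min: "\<And>X. left_ideal X \<Longrightarrow> U \<subseteq> X \<Longrightarrow> X \<subseteq> S \<Longrightarrow> X = U \<or> X = S"
    and x: "x \<in> S" "x \<notin> U"
  shows "S = {a * x + u | a u. u \<in> U}"
proof -
  let ?X = "{a * x + u | a u. u \<in> U}"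
  have U_subspace: "subspace U" and S_subspace: "subspace S"
    and S_left: "\<And>a y. y \<in> S \<Longrightarrow> a * y \<in> S"
    using U S(1) by (auto simp: left_ideal_def)
  have "U \<subseteq> ?X"
  proof
    fix u assume "u \<in> U"
    moreover have "u = 0 * x + u" by simp
    ultimately show "u \<in> ?X" by blast
  qed
  moreover have "?X \<subseteq> S"
  proof
    fix y assume "y \<in> ?X"
    then obtain a u where "y = a * x + u" "u \<in> U" by blast
    then show "y \<in> S"
      using S_left[OF x(1), of a] subspace_add[OF S_subspace] S(2) by blast
  qed
  moreover have "x \<in> ?X"
  proof -
    have "x = 1 * x + 0" by simp
    then show ?thesis using subspace_0[OF U_subspace] by blast
  qed
  ultimately show ?thesis
    using S_min[OF left_ideal_generated_modulo[OF U]] x(2) by blast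
qed

lemma simple_generator_exists:
  assumes U: "left_ideal U" and "left_ideal J" and "U \<subset> J"
  obtains w0 where "w0 \<in> J" "simple_generator U w0"
proof -
  obtain S where S: "left_ideal S" "U \<subset> S" "S \<subseteq> J"
    and S_min: "\<And>X. left_ideal X \<Longrightarrow> U \<subseteq> X \<Longrightarrow> X \<subseteq> S \<Longrightarrow> X = U \<or> X = S"
    using minimal_left_ideal_exists[OF assms(2,3)] by blast
  obtain w0 where w0: "w0 \<in> S" "w0 \<notin> U"
    using S(2) by blast
  have "\<exists>b. b * (y * w0) - w0 \<in> U" if y: "y * w0 \<notin> U" for y
  proof -
    have "y * w0 \<in> S"
      using S(1) w0(1) by (simp add: left_ideal_def)
    then have "S = {a * (y * w0) + u | a u. u \<in> U}"
      using minimal_left_ideal_generated[OF U S(1) _ S_min] S(2) y by blast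
    then obtain a u where u: "w0 = a * (y * w0) + u" "u \<in> U"
      using w0(1) by blast
    then have "a * (y * w0) - w0 = - u"
      by (simp add: algebra_simps)
    then show ?thesis
      using U u(2) subspace_neg by (intro exI[of _ a]) (simp add: left_ideal_def)
  qed
  then show ?thesis
    using that w0 S(3) unfolding simple_generator_def by blast
qed

text \<open>The algebra need not be commutative, so \<open>poly\<close> does not apply; polynomials in a single
  element \<open>z\<close> are evaluated directly.\<close>

definition poly_eval :: "'k poly \<Rightarrow> 'a \<Rightarrow> 'a" where
  "poly_eval p z = (\<Sum>i\<le>degree p. scale (coeff p i) (z ^ i))"

lemma poly_eval_eq_sum: "degree p \<le> N \<Longrightarrow> poly_eval p z = (\<Sum>i\<le>N. scale (coeff p i) (z ^ i))"
  unfolding poly_eval_def by (intro sum.mono_neutral_left) (auto simp: coeff_eq_0)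

lemma poly_eval_0: "poly_eval 0 z = 0"
  by (simp add: poly_eval_def)

lemma poly_eval_add: "poly_eval (p + q) z = poly_eval p z + poly_eval q z"
proof -
  let ?N = "max (degree p) (degree q)"
  have "poly_eval (p + q) z = (\<Sum>i\<le>?N. scale (coeff (p + q) i) (z ^ i))"
    by (rule poly_eval_eq_sum) (intro degree_add_le; simp)
  also have "\<dots> = (\<Sum>i\<le>?N. scale (coeff p i) (z ^ i)) + (\<Sum>i\<le>?N. scale (coeff q i) (z ^ i))"
    by (simp add: scale_left_distrib sum.distrib)
  also have "\<dots> = poly_eval p z + poly_eval q z"
    using poly_eval_eq_sum[of p ?N z] poly_eval_eq_sum[of q ?N z] by simp
  finally show ?thesis .
qed

lemma poly_eval_diff: "poly_eval (p - q) z = poly_eval p z - poly_eval q z"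
  using poly_eval_add[of "p - q" q z] by simp

lemma poly_eval_smult: "poly_eval (smult c p) z = scale c (poly_eval p z)"
proof -
  have "poly_eval (smult c p) z = (\<Sum>i\<le>degree p. scale (coeff (smult c p) i) (z ^ i))"
    by (rule poly_eval_eq_sum) (rule degree_smult_le)
  also have "\<dots> = scale c (poly_eval p z)"
    by (simp add: poly_eval_def scale_sum_right)
  finally show ?thesis .
qed

lemma poly_eval_pCons_0: "poly_eval (pCons 0 p) z = poly_eval p z * z"
proof -
  have "poly_eval (pCons 0 p) z = (\<Sum>i\<le>Suc (degree p). scale (coeff (pCons 0 p) i) (z ^ i))"
    by (rule poly_eval_eq_sum) (rule degree_pCons_le)
  also have "\<dots> = (\<Sum>i\<le>degree p. scale (coeff p i) (z ^ Suc i))"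
    by (subst sum.atMost_Suc_shift) simp
  also have "\<dots> = (\<Sum>i\<le>degree p. scale (coeff p i) (z ^ i) * z)"
    by (simp only: power_Suc2 scale_mult_left)
  finally show ?thesis
    by (simp add: poly_eval_def sum_distrib_right)
qed

lemma poly_eval_const: "poly_eval [:c:] z = scale c 1"
  by (simp add: poly_eval_def)

lemma poly_eval_monom: "poly_eval (monom c k) z = scale c (z ^ k)"
proof -
  have "poly_eval (monom c k) z = (\<Sum>i\<le>k. scale (coeff (monom c k) i) (z ^ i))"
    by (rule poly_eval_eq_sum) (rule degree_monom_le)
  also have "\<dots> = (\<Sum>i\<le>k. if i = k then scale c (z ^ i) else 0)"
    by (intro sum.cong) auto
  also have "\<dots> = scale c (z ^ k)"
    by simp
  finally show ?thesis .
qed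

lemma poly_eval_sum: "poly_eval (\<Sum>i\<in>K. p i) z = (\<Sum>i\<in>K. poly_eval (p i) z)"
  by (induct K rule: infinite_finite_induct) (simp_all add: poly_eval_0 poly_eval_add)

lemma poly_eval_linear_factor: "poly_eval (p * [:-r, 1:]) z = poly_eval p z * (z - scale r 1)"
proof -
  have "p * [:-r, 1:] = smult (-r) p + pCons 0 p"
    by (simp add: one_pCons[symmetric])
  then have "poly_eval (p * [:-r, 1:]) z = scale (-r) (poly_eval p z) + poly_eval p z * z"
    by (simp only: poly_eval_add poly_eval_smult poly_eval_pCons_0)
  then show ?thesis
    by (simp add: right_diff_distrib mult_scale_one)
qed

lemma algebraic_element: "\<exists>p. p \<noteq> 0 \<and> poly_eval p z = 0"
proof (cases "inj_on (\<lambda>k. z ^ k) {..dimension}")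
  case False
  then obtain i j where ij: "i \<noteq> j" "z ^ i = z ^ j"
    unfolding inj_on_def by blast
  have "coeff (monom 1 i - monom 1 j) i = (1 :: 'k)"
    using ij(1) by simp
  then have "monom 1 i - monom 1 j \<noteq> (0 :: 'k poly)"
    by (metis coeff_0 zero_neq_one)
  then show ?thesis
    using ij by (intro exI[of _ "monom 1 i - monom 1 j"]) (auto simp: poly_eval_diff poly_eval_monom)
next
  case True
  let ?Z = "(\<lambda>k. z ^ k) ` {..dimension}"
  have "dependent ?Z"
  proof (rule ccontr)
    assume "\<not> dependent ?Z"
    then have "card ?Z \<le> dimension"
      using independent_bound_general[of ?Z] dim_subset_UNIV[of ?Z] by simp
    then show False
      using card_image[OF True] by simp
  qed
  then obtain u where u: "\<exists>v\<in>?Z. u v \<noteq> 0" "(\<Sum>v\<in>?Z. scale (u v) v) = 0"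
    using dependent_finite[of ?Z] by blast
  define p where "p = (\<Sum>k\<le>dimension. monom (u (z ^ k)) k)"
  have "poly_eval p z = (\<Sum>k\<le>dimension. scale (u (z ^ k)) (z ^ k))"
    by (simp add: p_def poly_eval_sum poly_eval_monom)
  also have "\<dots> = 0"
    using u(2) sum.reindex[OF True, of "\<lambda>v. scale (u v) v"] by simp
  finally have "poly_eval p z = 0" .
  moreover have "coeff p k = u (z ^ k)" if "k \<le> dimension" for k
    using that by (simp add: p_def coeff_sum coeff_monom)
  then have "p \<noteq> 0"
    using u(1) by auto
  ultimately show ?thesis by blast
qed

lemma simple_generator_linear_factor:
  assumes U: "left_ideal U" and gen: "simple_generator U w0"
    and z: "\<And>a. a * w0 \<in> U \<Longrightarrow> a * (z * w0) \<in> U"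
    and factor: "poly_eval (q * [:-r, 1:]) z * w0 \<in> U"
  shows "(z - scale r 1) * w0 \<in> U \<or> poly_eval q z * w0 \<in> U"
proof (rule disjCI)
  have U_subspace: "subspace U" and U_left: "\<And>a x. x \<in> U \<Longrightarrow> a * x \<in> U"
    using U by (auto simp: left_ideal_def)
  define y where "y = poly_eval q z"
  define d where "d = z - scale r 1"
  assume "poly_eval q z * w0 \<notin> U"
  then obtain b where b: "b * (y * w0) - w0 \<in> U"
    using gen unfolding simple_generator_def y_def by blast
  have d_w0: "a * (d * w0) \<in> U" if "a * w0 \<in> U" for a
  proof -
    have "a * (d * w0) = a * (z * w0) - scale r (a * w0)"
      by (simp add: d_def left_diff_distrib right_diff_distrib scale_one_mult scale_mult_right)
    then show ?thesis
      using z[OF that] subspace_scale[OF U_subspace that] subspace_diff[OF U_subspace] by simp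
  qed
  have "(b * y - 1) * w0 \<in> U"
    using b by (simp add: left_diff_distrib mult.assoc)
  then have "(b * y - 1) * (d * w0) \<in> U"
    by (rule d_w0)
  moreover have "poly_eval (q * [:-r, 1:]) z * w0 = y * (d * w0)"
    by (simp only: poly_eval_linear_factor y_def d_def mult.assoc)
  then have "(b * y) * (d * w0) \<in> U"
    using U_left[OF factor, of b] by (simp add: mult.assoc)
  moreover have "d * w0 = (b * y) * (d * w0) - (b * y - 1) * (d * w0)"
    by (simp add: left_diff_distrib)
  ultimately show "(z - scale r 1) * w0 \<in> U"
    using subspace_diff[OF U_subspace] unfolding d_def by metis
qed

end

locale alg_closed_fd_algebra = finite_dimensional_algebra scale Basis
  for scale :: "'k::alg_closed_field \<Rightarrow> 'a::ring_1 \<Rightarrow> 'a" and Basis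
begin

lemma schur_scalar:
  assumes U: "left_ideal U" and gen: "simple_generator U w0"
    and z: "\<And>a. a * w0 \<in> U \<Longrightarrow> a * (z * w0) \<in> U"
  shows "\<exists>l. (z - scale l 1) * w0 \<in> U"
proof -
  have "\<exists>l. (z - scale l 1) * w0 \<in> U" if "p \<noteq> 0" "poly_eval p z * w0 \<in> U" for p
    using that
  proof (induction "degree p" arbitrary: p)
    case 0
    then obtain c where "p = [:c:]" "c \<noteq> 0"
      by (metis degree_0_id pCons_eq_0_iff)
    then have "scale c w0 \<in> U"
      using 0 by (simp add: poly_eval_const scale_one_mult)
    then have "scale (inverse c) (scale c w0) \<in> U"
      using U subspace_scale unfolding left_ideal_def by blast
    then have "w0 \<in> U"
      using \<open>c \<noteq> 0\<close> by simp
    then show ?case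
      using gen by (simp add: simple_generator_def)
  next
    case (Suc m)
    then obtain r where "poly p r = 0"
      using alg_closed_imp_poly_has_root[of p] by auto
    then obtain q where p: "p = q * [:-r, 1:]"
      by (metis poly_eq_0_iff_dvd dvdE mult.commute)
    have "q \<noteq> 0"
      using Suc.prems(1) p by auto
    then have "degree p = degree q + 1"
      unfolding p by (subst degree_mult_eq) auto
    then have "degree q = m"
      using Suc.hyps(2) by simp
    then show ?case
      using simple_generator_linear_factor[OF U gen z] Suc.hyps(1) Suc.prems(2) p \<open>q \<noteq> 0\<close> by blast
  qed
  moreover obtain p where "p \<noteq> 0" "poly_eval p z = 0"
    using algebraic_element by blast
  ultimately show ?thesis
    using subspace_0[of U] U by (simp add: left_ideal_def)
qed

end

section \<open>The tensor decomposition of a chief factor\<close>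

context finite_dimensional_algebra
begin

definition independent_mod :: "'a set \<Rightarrow> 'a set \<Rightarrow> bool" where
  "independent_mod U M \<longleftrightarrow> (\<forall>d. (\<Sum>m\<in>M. scale (d m) m) \<in> U \<longrightarrow> (\<forall>m\<in>M. d m = 0))"

lemma independent_mod_subset:
  assumes "independent_mod U N" and "M \<subseteq> N" and "finite N"
  shows "independent_mod U M"
  unfolding independent_mod_def
proof (intro allI impI ballI)
  fix d m assume sum_U: "(\<Sum>m\<in>M. scale (d m) m) \<in> U" and "m \<in> M"
  define d' where "d' x = (if x \<in> M then d x else 0)" for x
  have "(\<Sum>x\<in>N. scale (d' x) x) = (\<Sum>x\<in>M. scale (d x) x)"
    using assms(2,3) by (intro sum.mono_neutral_cong_right) (auto simp: d'_def)
  then have "\<forall>x\<in>N. d' x = 0"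
    using assms(1) sum_U unfolding independent_mod_def by metis
  then have "d' m = 0"
    using \<open>m \<in> M\<close> assms(2) by blast
  then show "d m = 0"
    using \<open>m \<in> M\<close> by (simp add: d'_def)
qed

end

text \<open>Quotients by \<open>U\<close> are represented inside the algebra by the images of the linear
  projection \<open>P\<close> with kernel \<open>U\<close>: \<open>W\<close> stands for \<open>(A w0 + U)/U\<close> and \<open>W'\<close> for
  \<open>ann_killed/U\<close>, and \<open>beta w w'\<close> is \<open>a * w'\<close> for any \<open>a\<close> with \<open>w \<equiv> a * w0\<close> modulo \<open>U\<close>.\<close>

locale chief_factor = alg_closed_fd_algebra scale Basis
  for scale :: "'k::alg_closed_field \<Rightarrow> 'a::ring_1 \<Rightarrow> 'a" and Basis +
  fixes U J :: "'a set" and w0 :: 'a and P :: "'a \<Rightarrow> 'a"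
  assumes ideal_U: "alg_ideal scale U" and ideal_J: "alg_ideal scale J"
    and cover: "ideal_cover U J"
    and w0_J: "w0 \<in> J" and w0_gen: "simple_generator U w0"
    and P_linear: "Vector_Spaces.linear scale scale P"
    and P_mod: "x - P x \<in> U" and P_kernel: "u \<in> U \<Longrightarrow> P u = 0"
begin

interpretation P: Vector_Spaces.linear scale scale P
  by (rule P_linear)

lemma U_subspace: "subspace U" and U_left: "x \<in> U \<Longrightarrow> a * x \<in> U"
  and U_right: "x \<in> U \<Longrightarrow> x * a \<in> U"
  using ideal_U by (simp_all add: alg_ideal_def)

lemma J_subspace: "subspace J" and J_left: "x \<in> J \<Longrightarrow> a * x \<in> J"
  and J_right: "x \<in> J \<Longrightarrow> x * a \<in> J"
  using ideal_J by (simp_all add: alg_ideal_def)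

lemma U_subset_J: "U \<subseteq> J"
  using cover by (auto simp: ideal_cover_def)

lemma U_add: "x \<in> U \<Longrightarrow> y \<in> U \<Longrightarrow> x + y \<in> U"
  by (rule subspace_add[OF U_subspace])

lemma U_diff: "x \<in> U \<Longrightarrow> y \<in> U \<Longrightarrow> x - y \<in> U"
  by (rule subspace_diff[OF U_subspace])

lemma U_scale: "x \<in> U \<Longrightarrow> scale c x \<in> U"
  by (rule subspace_scale[OF U_subspace])

lemma P_minus_mod: "P x - x \<in> U"
  using subspace_neg[OF U_subspace P_mod[of x]] by simp

lemma P_cong: "x - y \<in> U \<Longrightarrow> P x = P y"
  using P_kernel[of "x - y"] by (simp add: P.diff)

lemma P_idem: "P (P x) = P x"
  using P_cong[OF P_minus_mod[of x]] .

lemma P_in_superspace: "subspace X \<Longrightarrow> U \<subseteq> X \<Longrightarrow> x \<in> X \<Longrightarrow> P x \<in> X"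
  using subspace_diff[of X x "x - P x"] P_mod[of x] by auto

lemma U_iff_P_eq_0: "x \<in> U \<longleftrightarrow> P x = 0"
  using P_kernel P_mod[of x] by auto

definition ann_killed :: "'a set" where
  "ann_killed = {m \<in> J. \<forall>a. a * w0 \<in> U \<longrightarrow> a * m \<in> U}"

definition W :: "'a set" where
  "W = range (\<lambda>a. P (a * w0))"

definition W' :: "'a set" where
  "W' = P ` ann_killed"

definition gen_coeff :: "'a \<Rightarrow> 'a" where
  "gen_coeff w = (SOME a. w - a * w0 \<in> U)"

definition actL :: "'a \<Rightarrow> 'a \<Rightarrow> 'a" where
  "actL a w = P (a * w)"

definition actR :: "'a \<Rightarrow> 'a \<Rightarrow> 'a" where
  "actR w a = P (w * a)"

definition beta :: "'a \<Rightarrow> 'a \<Rightarrow> 'a" where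
  "beta w w' = P (gen_coeff w * w')"

lemma ann_killed_mult: "m \<in> ann_killed \<Longrightarrow> d * w0 \<in> U \<Longrightarrow> d * m \<in> U"
  unfolding ann_killed_def by blast

lemma ann_killed_subset_J: "ann_killed \<subseteq> J"
  unfolding ann_killed_def by blast

lemma U_subset_ann_killed: "U \<subseteq> ann_killed"
  unfolding ann_killed_def using U_subset_J U_left by blast

lemma w0_ann_killed: "w0 \<in> ann_killed"
  unfolding ann_killed_def using w0_J by blast

lemma subspace_ann_killed: "subspace ann_killed"
  unfolding subspace_def
proof (intro conjI ballI allI)
  show "0 \<in> ann_killed"
    using U_subset_ann_killed subspace_0[OF U_subspace] by blast
  show "x + y \<in> ann_killed" if "x \<in> ann_killed" "y \<in> ann_killed" for x y
    using that subspace_add[OF J_subspace] U_add unfolding ann_killed_def by (auto simp: distrib_left)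
  show "scale c x \<in> ann_killed" if "x \<in> ann_killed" for c x
    using that subspace_scale[OF J_subspace] U_scale
    unfolding ann_killed_def by (auto simp: scale_mult_right[symmetric])
qed

lemma ann_killed_mult_right: "m \<in> ann_killed \<Longrightarrow> m * b \<in> ann_killed"
  unfolding ann_killed_def using J_right U_right by (auto simp: mult.assoc[symmetric])

lemma subspace_W: "subspace W"
  unfolding subspace_def
proof (intro conjI ballI allI)
  have "0 = P (0 * w0)"
    by (simp add: P.zero)
  then show "0 \<in> W"
    unfolding W_def by blast
  show "x + y \<in> W" if x: "x \<in> W" and y: "y \<in> W" for x y
  proof -
    obtain a b where "x = P (a * w0)" "y = P (b * w0)"
      using x y unfolding W_def by blast
    then have "x + y = P ((a + b) * w0)"
      by (simp add: P.add distrib_right)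
    then show ?thesis unfolding W_def by blast
  qed
  show "scale c x \<in> W" if x: "x \<in> W" for c x
  proof -
    obtain a where "x = P (a * w0)"
      using x unfolding W_def by blast
    then have "scale c x = P (scale c a * w0)"
      by (simp add: P.scale scale_mult_left[symmetric])
    then show ?thesis unfolding W_def by blast
  qed
qed

lemma subspace_W': "subspace W'"
  unfolding W'_def by (rule P.subspace_image[OF subspace_ann_killed])

lemma P_W: "w \<in> W \<Longrightarrow> P w = w"
  unfolding W_def using P_idem by auto

lemma P_W': "w \<in> W' \<Longrightarrow> P w = w"
  unfolding W'_def using P_idem by auto

lemma W'_subset_ann_killed: "W' \<subseteq> ann_killed"
  unfolding W'_def using P_in_superspace[OF subspace_ann_killed U_subset_ann_killed] by blast

lemma gen_coeff_mod: "w \<in> W \<Longrightarrow> w - gen_coeff w * w0 \<in> U"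
proof -
  assume "w \<in> W"
  then obtain a where "w = P (a * w0)"
    unfolding W_def by blast
  then have "\<exists>a. w - a * w0 \<in> U"
    using P_minus_mod by blast
  then show ?thesis
    unfolding gen_coeff_def by (rule someI_ex)
qed

lemma actL_W: "w \<in> W \<Longrightarrow> actL a w \<in> W"
proof -
  assume "w \<in> W"
  then obtain b where "w = P (b * w0)"
    unfolding W_def by blast
  then have "P (a * w) = P ((a * b) * w0)"
    using P_cong U_left[OF P_minus_mod[of "b * w0"], of a] by (simp add: right_diff_distrib mult.assoc)
  then show "actL a w \<in> W"
    unfolding actL_def W_def by simp
qed

lemma left_module_W: "left_module scale W actL"
  unfolding left_module_def
proof (intro conjI allI impI)
  show "subspace W" by (rule subspace_W)
  show "actL a w \<in> W" if "w \<in> W" for a w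
    using that by (rule actL_W)
  show "actL a (w1 + w2) = actL a w1 + actL a w2" for a w1 w2
    by (simp add: actL_def distrib_left P.add)
  show "actL (a + b) w = actL a w + actL b w" for a b w
    by (simp add: actL_def distrib_right P.add)
  show "actL (a * b) w = actL a (actL b w)" for a b w
    using P_cong U_left[OF P_mod[of "b * w"], of a]
    by (simp add: actL_def right_diff_distrib mult.assoc)
  show "actL 1 w = w" if "w \<in> W" for w
    using that by (simp add: actL_def P_W)
  show "actL (scale c a) w = scale c (actL a w)" "actL a (scale c w) = scale c (actL a w)" for c a w
    by (simp_all add: actL_def P.scale scale_mult_left[symmetric] scale_mult_right[symmetric])
qed

lemma right_module_W': "right_module scale W' actR"
  unfolding right_module_def
proof (intro conjI allI impI)
  show "subspace W'" by (rule subspace_W')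
  show "actR w a \<in> W'" if "w \<in> W'" for a w
    using that W'_subset_ann_killed ann_killed_mult_right unfolding actR_def W'_def by blast
  show "actR (w1 + w2) a = actR w1 a + actR w2 a" for a w1 w2
    by (simp add: actR_def distrib_right P.add)
  show "actR w (a + b) = actR w a + actR w b" for a b w
    by (simp add: actR_def distrib_left P.add)
  show "actR w (a * b) = actR (actR w a) b" for a b w
    using P_cong U_right[OF P_mod[of "w * a"], of b]
    by (simp add: actR_def left_diff_distrib mult.assoc)
  show "actR w 1 = w" if "w \<in> W'" for w
    using that by (simp add: actR_def P_W')
  show "actR w (scale c a) = scale c (actR w a)" "actR (scale c w) a = scale c (actR w a)" for c a w
    by (simp_all add: actR_def P.scale scale_mult_left[symmetric] scale_mult_right[symmetric])
qed

lemma P_mult_P_left: "P (a * P x) = P (a * x)"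
  using P_cong U_left[OF P_minus_mod[of x], of a] by (simp add: right_diff_distrib)

lemma P_mult_P_right: "P (P x * a) = P (x * a)"
  using P_cong U_right[OF P_minus_mod[of x], of a] by (simp add: left_diff_distrib)

lemma beta_eq:
  assumes "w \<in> W" and "w' \<in> W'" and "w - a * w0 \<in> U"
  shows "beta w w' = P (a * w')"
proof -
  have "(gen_coeff w - a) * w0 = (w - a * w0) - (w - gen_coeff w * w0)"
    by (simp add: algebra_simps)
  also have "\<dots> \<in> U"
    using U_diff[OF assms(3) gen_coeff_mod[OF assms(1)]] .
  finally have "(gen_coeff w - a) * w' \<in> U"
    using ann_killed_mult W'_subset_ann_killed assms(2) by blast
  then show ?thesis
    unfolding beta_def by (intro P_cong) (simp add: left_diff_distrib)
qed

lemma beta_in_J: "w \<in> W \<Longrightarrow> w' \<in> W' \<Longrightarrow> beta w w' \<in> J"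
  unfolding beta_def
  using P_in_superspace[OF J_subspace U_subset_J] J_left W'_subset_ann_killed ann_killed_subset_J
  by blast

lemma beta_add_left:
  assumes "w1 \<in> W" "w2 \<in> W" "w' \<in> W'"
  shows "beta (w1 + w2) w' = beta w1 w' + beta w2 w'"
proof -
  have "w1 + w2 - (gen_coeff w1 + gen_coeff w2) * w0 \<in> U"
    using U_add[OF gen_coeff_mod[OF assms(1)] gen_coeff_mod[OF assms(2)]] by (simp add: algebra_simps)
  then have "beta (w1 + w2) w' = P ((gen_coeff w1 + gen_coeff w2) * w')"
    using assms subspace_add[OF subspace_W] by (intro beta_eq) auto
  then show ?thesis
    by (simp add: beta_def distrib_right P.add)
qed

lemma beta_scale_left:
  assumes "w \<in> W" "w' \<in> W'"
  shows "beta (scale c w) w' = scale c (beta w w')"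
proof -
  have "scale c w - scale c (gen_coeff w) * w0 \<in> U"
    using U_scale[OF gen_coeff_mod[OF assms(1)], of c]
    by (simp add: scale_right_diff_distrib scale_mult_left)
  then have "beta (scale c w) w' = P (scale c (gen_coeff w) * w')"
    using assms subspace_scale[OF subspace_W] by (intro beta_eq) auto
  then show ?thesis
    by (simp add: beta_def P.scale scale_mult_left[symmetric])
qed

lemma beta_balanced_left:
  assumes "w \<in> W" "w' \<in> W'"
  shows "a * beta w w' - beta (actL a w) w' \<in> U"
proof -
  have "actL a w - (a * gen_coeff w) * w0 = (P (a * w) - a * w) + a * (w - gen_coeff w * w0)"
    by (simp add: actL_def algebra_simps)
  also have "\<dots> \<in> U"
    using U_add[OF P_minus_mod U_left[OF gen_coeff_mod[OF assms(1)]]] .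
  finally have "beta (actL a w) w' = P (a * gen_coeff w * w')"
    using assms actL_W by (intro beta_eq) auto
  then have "P (a * beta w w' - beta (actL a w) w') = 0"
    by (simp add: beta_def P.diff P_mult_P_left P_idem mult.assoc)
  then show ?thesis
    by (simp add: U_iff_P_eq_0)
qed

lemma beta_balanced_right:
  assumes "w \<in> W" "w' \<in> W'"
  shows "beta w w' * a - beta w (actR w' a) \<in> U"
proof -
  have "P (beta w w' * a - beta w (actR w' a)) = 0"
    by (simp add: beta_def actR_def P.diff P_mult_P_left P_mult_P_right P_idem mult.assoc)
  then show ?thesis
    by (simp add: U_iff_P_eq_0)
qed

definition tensor_image :: "'a set" where
  "tensor_image = (\<lambda>(w, w'). beta w w') ` (W \<times> W') \<union> U"

lemma beta_in_span: "w \<in> W \<Longrightarrow> w' \<in> W' \<Longrightarrow> beta w w' \<in> span tensor_image"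
  unfolding tensor_image_def by (intro span_base) blast

lemma U_subset_span: "U \<subseteq> span tensor_image"
  unfolding tensor_image_def using span_superset by blast

lemma span_tensor_image_subset_J: "span tensor_image \<subseteq> J"
  using beta_in_J U_subset_J unfolding tensor_image_def by (intro span_minimal J_subspace) auto

lemma mult_tensor_image_left: "g \<in> tensor_image \<Longrightarrow> a * g \<in> span tensor_image"
proof (cases "g \<in> U")
  case False
  assume "g \<in> tensor_image"
  then obtain w w' where ww': "w \<in> W" "w' \<in> W'" "g = beta w w'"
    using False unfolding tensor_image_def by auto
  have "a * g - beta (actL a w) w' \<in> span tensor_image"
    using beta_balanced_left[OF ww'(1,2)] U_subset_span ww'(3) by blast
  from span_add[OF this beta_in_span[OF actL_W[OF ww'(1), of a] ww'(2)]]
  show ?thesis by simp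
qed (use U_left U_subset_span in blast)

lemma mult_tensor_image_right: "g \<in> tensor_image \<Longrightarrow> g * a \<in> span tensor_image"
proof (cases "g \<in> U")
  case False
  assume "g \<in> tensor_image"
  then obtain w w' where ww': "w \<in> W" "w' \<in> W'" "g = beta w w'"
    using False unfolding tensor_image_def by auto
  have "actR w' a \<in> W'"
    using right_module_W' ww'(2) by (simp add: right_module_def)
  have "g * a - beta w (actR w' a) \<in> span tensor_image"
    using beta_balanced_right[OF ww'(1,2)] U_subset_span ww'(3) by blast
  from span_add[OF this beta_in_span[OF ww'(1) \<open>actR w' a \<in> W'\<close>]]
  show ?thesis by simp
qed (use U_right U_subset_span in blast)

lemma ideal_span_tensor_image: "alg_ideal scale (span tensor_image)"
  unfolding alg_ideal_def
proof (intro conjI allI impI)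
  show "subspace (span tensor_image)"
    by (rule subspace_span)
  fix a x assume "x \<in> span tensor_image"
  then show "a * x \<in> span tensor_image" "x * a \<in> span tensor_image"
    using span_mult_left_closed[OF mult_tensor_image_left] span_mult_right_closed[OF mult_tensor_image_right]
    by blast+
qed

lemma P_w0_in_W: "P w0 \<in> W"
  unfolding W_def using rangeI[of "\<lambda>a. P (a * w0)" 1] by simp

lemma P_w0_in_W': "P w0 \<in> W'"
  unfolding W'_def using w0_ann_killed by blast

lemma beta_diagonal_notin_U: "beta (P w0) (P w0) \<notin> U"
proof -
  have "beta (P w0) (P w0) = P w0"
    using beta_eq[OF P_w0_in_W P_w0_in_W', of 1] P_minus_mod by (simp add: P_idem)
  moreover have "P w0 \<notin> U"
  proof
    assume "P w0 \<in> U"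
    then have "P w0 - (P w0 - w0) \<in> U"
      using U_diff P_minus_mod by blast
    then show False
      using w0_gen by (simp add: simple_generator_def)
  qed
  ultimately show ?thesis
    by simp
qed

lemma J_subset_span_beta: "J \<subseteq> span ((\<lambda>(w, w'). beta w w') ` (W \<times> W') \<union> U)"
proof -
  have "span tensor_image \<noteq> U"
    using beta_in_span[OF P_w0_in_W P_w0_in_W'] beta_diagonal_notin_U by blast
  then have "span tensor_image = J"
    using cover ideal_span_tensor_image span_tensor_image_subset_J U_subset_span
    unfolding ideal_cover_def by blast
  then show ?thesis
    unfolding tensor_image_def by simp
qed

lemma relation_scalar_coeffs_vanish:
  assumes "M \<subseteq> ann_killed" and "independent_mod U M" and rel: "(\<Sum>m\<in>M. z m * m) \<in> U"
    and scalar: "\<And>m. m \<in> M \<Longrightarrow> (z m - scale (d m) 1) * w0 \<in> U"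
  shows "\<forall>m\<in>M. d m = 0"
proof -
  have "(\<Sum>m\<in>M. z m * m) - (\<Sum>m\<in>M. scale (d m) m) = (\<Sum>m\<in>M. z m * m - scale (d m) m)"
    by (rule sum_subtractf[symmetric])
  also have "\<dots> = (\<Sum>m\<in>M. (z m - scale (d m) 1) * m)"
    by (intro sum.cong refl) (simp add: left_diff_distrib scale_one_mult)
  also have "\<dots> \<in> U"
    using assms(1) scalar ann_killed_mult by (intro subspace_sum[OF U_subspace]) blast
  finally have "(\<Sum>m\<in>M. z m * m) - ((\<Sum>m\<in>M. z m * m) - (\<Sum>m\<in>M. scale (d m) m)) \<in> U"
    by (rule U_diff[OF rel])
  then have "(\<Sum>m\<in>M. scale (d m) m) \<in> U"
    by simp
  then show ?thesis
    using assms(2) unfolding independent_mod_def by blast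
qed

lemma relation_drop_killed:
  assumes "finite M" and "m' \<notin> M" and "m' \<in> ann_killed"
    and "(\<Sum>m\<in>insert m' M. y m * m) \<in> U" and "y m' * w0 \<in> U"
  shows "(\<Sum>m\<in>M. y m * m) \<in> U"
proof -
  have "(\<Sum>m\<in>M. y m * m) = (\<Sum>m\<in>insert m' M. y m * m) - y m' * m'"
    using assms(1,2) by simp
  then show ?thesis
    using U_diff[OF assms(4) ann_killed_mult[OF assms(3,5)]] by simp
qed

text \<open>The density argument, by induction on \<open>M\<close>: if the coefficient of \<open>m'\<close> in a relation does not
  annihilate \<open>w0\<close> modulo \<open>U\<close>, the relation can be multiplied on the left so that this coefficient
  becomes \<open>1\<close> modulo the annihilator. By the induction hypothesis every other coefficient then
  induces an endomorphism of the simple module generated by \<open>w0\<close>, which Schur's lemma turns into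
  a scalar, leaving a nontrivial linear relation modulo \<open>U\<close>.\<close>

definition relations_kill_w0 :: "'a set \<Rightarrow> bool" where
  "relations_kill_w0 M \<longleftrightarrow> (\<forall>x. (\<Sum>m\<in>M. x m * m) \<in> U \<longrightarrow> (\<forall>m\<in>M. x m * w0 \<in> U))"

lemma relation_coeffs_scalar:
  assumes M: "finite M" "m' \<notin> M" "m' \<in> ann_killed" and IH: "relations_kill_w0 M"
    and rel: "\<And>a. (\<Sum>m\<in>insert m' M. (a * z m) * m) \<in> U" and z_m': "(z m' - 1) * w0 \<in> U"
    and "m \<in> M"
  shows "\<exists>l. (z m - scale l 1) * w0 \<in> U"
proof (rule schur_scalar[OF alg_ideal_imp_left_ideal[OF ideal_U] w0_gen])
  fix a assume a: "a * w0 \<in> U"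
  have "(a * z m') * w0 = a * ((z m' - 1) * w0) + a * w0"
    by (simp add: algebra_simps)
  then have "(a * z m') * w0 \<in> U"
    using U_add[OF U_left[OF z_m'] a] by simp
  then have sum_M: "(\<Sum>m\<in>M. (a * z m) * m) \<in> U"
    by (rule relation_drop_killed[where y = "\<lambda>m. a * z m", OF M rel])
  have "(a * z m) * w0 \<in> U"
    using IH[unfolded relations_kill_w0_def, rule_format, OF sum_M \<open>m \<in> M\<close>] by simp
  then show "a * (z m * w0) \<in> U"
    by (simp add: mult.assoc)
qed

lemma relation_leading_coeff_killed:
  assumes M: "finite M" "m' \<notin> M" "insert m' M \<subseteq> ann_killed" "independent_mod U (insert m' M)"
    and IH: "relations_kill_w0 M" and rel: "(\<Sum>m\<in>insert m' M. x m * m) \<in> U"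
  shows "x m' * w0 \<in> U"
proof (rule ccontr)
  assume "x m' * w0 \<notin> U"
  then obtain b where b: "b * (x m' * w0) - w0 \<in> U"
    using w0_gen unfolding simple_generator_def by blast
  define z where "z m = b * x m" for m
  have z_rel: "(\<Sum>m\<in>insert m' M. (a * z m) * m) \<in> U" for a
  proof -
    have "(\<Sum>m\<in>insert m' M. (a * z m) * m) = (a * b) * (\<Sum>m\<in>insert m' M. x m * m)"
      by (simp add: z_def sum_distrib_left mult.assoc)
    then show ?thesis
      using U_left[OF rel] by simp
  qed
  have z_m': "(z m' - 1) * w0 \<in> U"
    using b by (simp add: z_def left_diff_distrib mult.assoc)
  define d where "d m = (if m = m' then 1 else (SOME l. (z m - scale l 1) * w0 \<in> U))" for m
  have scalar: "(z m - scale (d m) 1) * w0 \<in> U" if "m \<in> insert m' M" for m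
  proof (cases "m = m'")
    case True
    then show ?thesis using z_m' by (simp add: d_def)
  next
    case False
    then have "m \<in> M"
      using that by simp
    then have "\<exists>l. (z m - scale l 1) * w0 \<in> U"
      using relation_coeffs_scalar[OF M(1,2) _ IH z_rel z_m'] M(3) by simp
    then have "(z m - scale (SOME l. (z m - scale l 1) * w0 \<in> U) 1) * w0 \<in> U"
      by (rule someI_ex)
    then show ?thesis
      using False by (simp add: d_def)
  qed
  have "(\<Sum>m\<in>insert m' M. z m * m) \<in> U"
    using z_rel[of 1] by simp
  then have "\<forall>m\<in>insert m' M. d m = 0"
    using scalar by (rule relation_scalar_coeffs_vanish[OF M(3,4)])
  then show False
    by (simp add: d_def)
qed

lemma relations_kill_w0_if_independent:
  assumes "finite M" and "M \<subseteq> ann_killed" and "independent_mod U M"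
  shows "relations_kill_w0 M"
  using assms
proof (induction M rule: finite_induct)
  case empty
  then show ?case by (simp add: relations_kill_w0_def)
next
  case (insert m' M)
  have M: "M \<subseteq> ann_killed" "m' \<in> ann_killed"
    using insert.prems(1) by simp_all
  moreover have "independent_mod U M"
    using independent_mod_subset[OF insert.prems(2) subset_insertI] insert.hyps(1) by simp
  ultimately have IH: "relations_kill_w0 M"
    using insert.IH by blast
  show ?case
    unfolding relations_kill_w0_def
  proof (intro allI impI ballI)
    fix x m0 assume rel: "(\<Sum>m\<in>insert m' M. x m * m) \<in> U" and "m0 \<in> insert m' M"
    have "x m' * w0 \<in> U"
      using relation_leading_coeff_killed[OF insert.hyps insert.prems(1,2) IH rel] .
    then have "(\<Sum>m\<in>M. x m * m) \<in> U"
      by (rule relation_drop_killed[OF insert.hyps M(2) rel])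
    then have "\<forall>m\<in>M. x m * w0 \<in> U"
      using IH unfolding relations_kill_w0_def by blast
    then show "x m0 * w0 \<in> U"
      using \<open>x m' * w0 \<in> U\<close> \<open>m0 \<in> insert m' M\<close> by blast
  qed
qed

lemma independent_mod_if_fixed:
  assumes "finite X" and "independent X" and "\<And>x. x \<in> X \<Longrightarrow> P x = x"
  shows "independent_mod U X"
  unfolding independent_mod_def
proof (intro allI impI)
  fix d assume sum_U: "(\<Sum>x\<in>X. scale (d x) x) \<in> U"
  have "P (\<Sum>x\<in>X. scale (d x) x) = (\<Sum>x\<in>X. scale (d x) (P x))"
    by (simp only: P.sum P.scale)
  also have "\<dots> = (\<Sum>x\<in>X. scale (d x) x)"
    using assms(3) by (intro sum.cong) simp_all
  finally have "(\<Sum>x\<in>X. scale (d x) x) = 0"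
    using P_kernel[OF sum_U] by simp
  then show "\<forall>x\<in>X. d x = 0"
    using assms(1,2) unfolding independent_explicit_finite_subsets by blast
qed

lemma beta_relation_lift:
  assumes "(\<Sum>(b, b')\<in>B \<times> B'. scale (c (b, b')) (beta b b')) \<in> U"
  shows "(\<Sum>b'\<in>B'. (\<Sum>b\<in>B. scale (c (b, b')) (gen_coeff b)) * b') \<in> U"
proof -
  define Y where "Y = (\<Sum>(b, b')\<in>B \<times> B'. scale (c (b, b')) (gen_coeff b * b'))"
  have "(\<Sum>(b, b')\<in>B \<times> B'. scale (c (b, b')) (beta b b')) = P Y"
    by (simp only: Y_def beta_def P.sum P.scale split_def)
  then have "Y \<in> U"
    using assms by (simp add: U_iff_P_eq_0 P_idem)
  have "Y = (\<Sum>b\<in>B. \<Sum>b'\<in>B'. scale (c (b, b')) (gen_coeff b * b'))"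
    unfolding Y_def by (rule sum.cartesian_product[symmetric])
  also have "\<dots> = (\<Sum>b'\<in>B'. \<Sum>b\<in>B. scale (c (b, b')) (gen_coeff b * b'))"
    by (rule sum.swap)
  also have "\<dots> = (\<Sum>b'\<in>B'. (\<Sum>b\<in>B. scale (c (b, b')) (gen_coeff b)) * b')"
    by (simp add: sum_distrib_right scale_mult_left)
  finally show ?thesis
    using \<open>Y \<in> U\<close> by simp
qed

lemma beta_independent:
  assumes B: "finite B" "B \<subseteq> W" "independent B"
    and B': "finite B'" "B' \<subseteq> W'" "independent B'"
    and sum_U: "(\<Sum>(b, b')\<in>B \<times> B'. scale (c (b, b')) (beta b b')) \<in> U"
    and b0: "b0 \<in> B" and b0': "b0' \<in> B'"
  shows "c (b0, b0') = 0"
proof -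
  have indep_B': "independent_mod U B'"
    using independent_mod_if_fixed[OF B'(1,3)] P_W' B'(2) by blast
  have B'_killed: "B' \<subseteq> ann_killed"
    using B'(2) W'_subset_ann_killed by blast
  have "(\<Sum>b\<in>B. scale (c (b, b0')) (gen_coeff b)) * w0 \<in> U"
    using relations_kill_w0_if_independent[OF B'(1) B'_killed indep_B', unfolded relations_kill_w0_def,
        rule_format, OF beta_relation_lift[OF sum_U] b0'] by simp
  then have "(\<Sum>b\<in>B. scale (c (b, b0')) (gen_coeff b * w0)) \<in> U"
    by (simp add: sum_distrib_right scale_mult_left)
  moreover have "(\<Sum>b\<in>B. scale (c (b, b0')) (b - gen_coeff b * w0)) \<in> U"
    using gen_coeff_mod B(2) by (intro subspace_sum[OF U_subspace] U_scale) blast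
  ultimately have "(\<Sum>b\<in>B. scale (c (b, b0')) (gen_coeff b * w0)) +
      (\<Sum>b\<in>B. scale (c (b, b0')) (b - gen_coeff b * w0)) \<in> U"
    by (rule U_add)
  also have "(\<Sum>b\<in>B. scale (c (b, b0')) (gen_coeff b * w0)) +
      (\<Sum>b\<in>B. scale (c (b, b0')) (b - gen_coeff b * w0)) = (\<Sum>b\<in>B. scale (c (b, b0')) b)"
    by (simp add: sum.distrib[symmetric] scale_right_diff_distrib)
  finally have "(\<Sum>b\<in>B. scale (c (b, b0')) b) \<in> U" .
  moreover have "independent_mod U B"
    using independent_mod_if_fixed[OF B(1,3)] P_W B(2) by blast
  ultimately show ?thesis
    using b0 unfolding independent_mod_def by (elim allE[of _ "\<lambda>b. c (b, b0')"]) simp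
qed

lemma quotient_iso_tensor_W_W': "quotient_iso_tensor scale J U W actL W' actR beta"
  unfolding quotient_iso_tensor_def
proof (intro conjI allI impI)
  show "beta w w' \<in> J" if "w \<in> W" "w' \<in> W'" for w w'
    using that by (rule beta_in_J)
  show "beta (w1 + w2) w' = beta w1 w' + beta w2 w'" if "w1 \<in> W" "w2 \<in> W" "w' \<in> W'" for w1 w2 w'
    using that by (rule beta_add_left)
  show "beta w (w1' + w2') = beta w w1' + beta w w2'" for w w1' w2'
    by (simp add: beta_def distrib_left P.add)
  show "beta (scale c w) w' = scale c (beta w w')" if "w \<in> W" "w' \<in> W'" for c w w'
    using that by (rule beta_scale_left)
  show "beta w (scale c w') = scale c (beta w w')" for c w w'
    by (simp add: beta_def P.scale scale_mult_right[symmetric])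
  show "a * beta w w' - beta (actL a w) w' \<in> U" if "w \<in> W" "w' \<in> W'" for a w w'
    using that by (rule beta_balanced_left)
  show "beta w w' * a - beta w (actR w' a) \<in> U" if "w \<in> W" "w' \<in> W'" for a w w'
    using that by (rule beta_balanced_right)
  show "J \<subseteq> span ((\<lambda>(w, w'). beta w w') ` (W \<times> W') \<union> U)"
    by (rule J_subset_span_beta)
  show "\<forall>p\<in>B \<times> B'. c p = 0"
    if "finite B" "finite B'" "B \<subseteq> W" "B' \<subseteq> W'" "\<not> dependent B" "\<not> dependent B'"
      "(\<Sum>(b, b')\<in>B \<times> B'. scale (c (b, b')) (beta b b')) \<in> U" for B B' c
  proof
    fix p assume "p \<in> B \<times> B'"
    then obtain b b' where "p = (b, b')" "b \<in> B" "b' \<in> B'"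
      by blast
    then show "c p = 0"
      using beta_independent[of B B' c b b'] that by simp
  qed
qed

end

lemma (in alg_closed_fd_algebra) chief_factor_tensor_decomposition:
  assumes "alg_ideal scale U" and "alg_ideal scale J" and "ideal_cover U J"
  shows "\<exists>W actL W' actR beta. left_module scale W actL \<and> right_module scale W' actR \<and>
    quotient_iso_tensor scale J U W actL W' actR beta"
proof -
  obtain w0 where "w0 \<in> J" "simple_generator U w0"
    using simple_generator_exists[of U J] assms alg_ideal_imp_left_ideal
    unfolding ideal_cover_def by blast
  moreover obtain P where "Vector_Spaces.linear scale scale P" "\<And>x. x - P x \<in> U" "\<And>u. u \<in> U \<Longrightarrow> P u = 0"
    using linear_projection_modulo_exists assms(1) unfolding alg_ideal_def by blast
  ultimately interpret chief_factor scale Basis U J w0 P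
    using assms by (intro chief_factor.intro chief_factor_axioms.intro alg_closed_fd_algebra_axioms)
  show ?thesis
    using left_module_W right_module_W' quotient_iso_tensor_W_W' by blast
qed

lemma fd_algebra_imp_finite_dimensional_algebra:
  assumes "fd_algebra scale"
  obtains Basis where "finite_dimensional_algebra scale Basis"
proof -
  interpret vector_space scale
    using assms by (simp add: fd_algebra_def)
  obtain B0 where B0: "finite B0" "span B0 = UNIV"
    using assms by (auto simp: fd_algebra_def)
  obtain B where B: "independent B" "span B = UNIV"
    using basis_exists[of UNIV] by (metis span_UNIV subset_antisym span_mono)
  have "finite B"
    using independent_span_bound[OF B0(1) B(1)] B0(2) by simp
  then have "finite_dimensional_vector_space scale B"
    using B by unfold_locales
  moreover have "\<forall>c x y. scale c (x * y) = scale c x * y \<and> scale c (x * y) = x * scale c y"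
    using assms unfolding fd_algebra_def by blast
  ultimately have "finite_dimensional_algebra scale B"
    by (intro finite_dimensional_algebra.intro finite_dimensional_algebra_axioms.intro) blast+
  then show ?thesis
    by (rule that)
qed

theorem theorem6p4:
  fixes scale :: "'k::alg_closed_field \<Rightarrow> 'a::ring_1 \<Rightarrow> 'a"
  assumes "fd_algebra scale"
  shows "\<exists>(L :: nat set) le I. standardly_based scale L le I"
proof -
  obtain Basis where "finite_dimensional_algebra scale Basis"
    using fd_algebra_imp_finite_dimensional_algebra[OF assms] .
  then interpret alg_closed_fd_algebra scale Basis
    by (simp add: alg_closed_fd_algebra_def)
  have "alg_ideal scale UNIV"
    by (simp add: alg_ideal_def subspace_UNIV)
  obtain n I where I: "I 0 = UNIV" "I n = {0}" "\<forall>k\<le>n. alg_ideal scale (I k)"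
    "\<forall>k<n. ideal_cover (I (Suc k)) (I k)"
    using chief_series_exists[OF \<open>alg_ideal scale UNIV\<close>] by (elim exE conjE) (rule that)
  have "standardly_based scale {..<n} (\<le>) I"
  proof (rule standardly_based_of_chain)
    show "I 0 = UNIV" "I n = {0}"
      using I(1,2) .
    show "alg_ideal scale (I k)" if "k \<le> n" for k
      using I(3) that by blast
    show "I (Suc k) \<subseteq> I k" if "k < n" for k
      using I(4) that by (simp add: ideal_cover_def less_imp_le)
    show "\<exists>W actL W' actR beta. left_module scale W actL \<and> right_module scale W' actR \<and>
      quotient_iso_tensor scale (I k) (I (Suc k)) W actL W' actR beta" if "k < n" for k
      using chief_factor_tensor_decomposition I(3,4) that by simp
  qed
  then show ?thesis
    by blast
qed

end
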